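(* For integers $1\le k\le n$ let $p_k(n)$ be the number of partitions of $n$ into exactly $k$ parts, and let $F_n(x)=\sum_{k=1}^n p_k(n)x^k$. Then the arguments of the zeros of $\{F_n(x)\}$ are uniformly distributed on the unit circle as $n\to\infty$; that is, the measures $\frac{1}{\deg F_n}\sum_{z\in\mathcal{Z}(F_n)}\delta_{\arg z}$ converge in the weak$^*$-topology to normalized Lebesgue measure on the unit circle.
   Context: $\mathcal{Z}(q)$ denotes the set of zeros of the polynomial $q$ (counted with multiplicity); the sum is taken over the zeros for which the argument is defined. *)

theory Defs
  imports "HOL-Analysis.Analysis" "HOL-Library.Multiset" "HOL-Computational_Algebra.Polynomial"
begin

definition part_count :: "nat \<Rightarrow> nat \<Rightarrow> nat" where
  "part_count k n = card {M :: nat multiset. size M = k \<and> (\<forall>x\<in>#M. 0 < x) \<and> sum_mset M = n}"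

definition Fpoly :: "nat \<Rightarrow> complex poly" where
  "Fpoly n = (\<Sum>k=1..n. monom (of_nat (part_count k n)) k)"

text \<open>Integral of a test function against the zero-argument counting measure
  (1/deg F) * sum over nonzero zeros z (with multiplicity) of delta_{arg z}.\<close>
definition zero_arg_avg :: "complex poly \<Rightarrow> (complex \<Rightarrow> real) \<Rightarrow> real" where
  "zero_arg_avg q f = (1 / real (degree q)) *
     (\<Sum>z\<in>{z. poly q z = 0 \<and> z \<noteq> 0}. real (order z q) * f (cis (Arg z)))"

end

theory Submission
  imports
    Defs
    "HOL-Complex_Analysis.Complex_Analysis"
    "HOL-Computational_Algebra.Fundamental_Theorem_Algebra"
    "HOL-Real_Asymp.Real_Asymp"
begin

text \<open>
  Since \<open>F n\<close> is monic with \<open>F n (0) = 0\<close> and \<open>F n'(0) = 1\<close>, it factors as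
  \<open>x \<Prod>\<^sub>z (x - z)^e(z)\<close> over its nonzero zeros \<open>z\<close> with \<open>\<Prod>\<^sub>z |z|^e(z) = 1\<close>, and on the unit
  circle \<open>|F n| \<le> n p(n) = exp (o(n))\<close>, because a partition of \<open>n\<close> has at most \<open>\<surd>(2n)\<close>
  distinct parts. An Erdos-Turan type argument turns this into a bound on the power sums of the
  arguments: after reflecting the zeros into the unit disc, the maximum principle, a substitution
  by roots of unity and a Borel-Caratheodory estimate give
  \<open>|\<Sum>\<^sub>z e(z) sgn(z)^m| \<le> 4 m ln (n p(n)) + 2 = o(n)\<close>. So every nontrivial Fourier coefficient of
  the normalised zero-argument measures tends to \<open>0\<close>, and Weyl's criterion (proved by
  Stone-Weierstrass approximation with trigonometric polynomials) gives the equidistribution.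
\<close>

section \<open>The number of partitions grows subexponentially\<close>

definition partitions :: "nat \<Rightarrow> nat multiset set" where
  "partitions n = {M. (\<forall>x\<in>#M. 0 < x) \<and> sum_mset M = n}"

lemma card_times_Suc_card_le_sum:
  assumes "finite S" "0 \<notin> S"
  shows "card S * (card S + 1) \<le> 2 * \<Sum>S"
  using assms
proof (induction "card S" arbitrary: S)
  case 0
  then show ?case by simp
next
  case (Suc k)
  define m where "m = Max S"
  have "S \<noteq> {}" using Suc.hyps(2) by auto
  hence m: "m \<in> S" using Suc.prems(1) by (simp add: m_def)
  have "S \<subseteq> {1..m}" using Suc.prems by (auto simp: m_def Suc_le_eq intro: gr0I)
  hence "card S \<le> m" by (metis card_atLeastAtMost card_mono diff_Suc_1 finite_atLeastAtMost)
  have cS: "card S = Suc k" using Suc.hyps(2) by simp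
  have IH: "k * (k + 1) \<le> 2 * \<Sum>(S - {m})"
    using Suc.hyps(1)[of "S - {m}"] Suc.prems m cS by simp
  have "\<Sum>S = m + \<Sum>(S - {m})" using Suc.prems(1) m by (simp add: sum.remove)
  moreover have "card S * (card S + 1) = k * (k + 1) + 2 * card S" using cS by simp
  ultimately show ?case using IH \<open>card S \<le> m\<close> by linarith
qed

lemma count_times_le_sum_mset: "count M x * x \<le> sum_mset (M :: nat multiset)"
proof -
  have "replicate_mset (count M x) x \<subseteq># M" by (simp add: subseteq_mset_def)
  then obtain N where "M = replicate_mset (count M x) x + N" by (metis subset_mset.le_iff_add)
  hence "sum_mset M = count M x * x + sum_mset N" by (metis sum_mset.union sum_mset_replicate_mset of_nat_id)
  thus ?thesis by simp
qed

lemma sum_set_mset_le_sum_mset: "\<Sum>(set_mset M) \<le> sum_mset (M :: nat multiset)"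
  by (induction M) (auto simp: insert_absorb sum.insert_if)

text \<open>Partitions are counted through this injective encoding into small subsets of \<open>{1..n}\<^sup>2\<close>.\<close>
definition part_multiplicities :: "nat multiset \<Rightarrow> (nat \<times> nat) set" where
  "part_multiplicities M = (\<lambda>x. (x, count M x)) ` set_mset M"

lemma inj_part_multiplicities: "inj part_multiplicities"
proof (rule injI, rule multiset_eqI)
  fix M M' x assume eq: "part_multiplicities M = part_multiplicities M'"
  have fst_image: "fst ` part_multiplicities M = set_mset M" for M
    by (simp add: part_multiplicities_def image_image)
  show "count M x = count M' x"
  proof (cases "x \<in># M")
    case True
    hence "(x, count M x) \<in> part_multiplicities M" by (simp add: part_multiplicities_def)
    hence "(x, count M x) \<in> part_multiplicities M'" using eq by simp
    thus ?thesis by (auto simp: part_multiplicities_def)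
  next
    case False
    hence "x \<notin># M'" using fst_image eq by metis
    with False show ?thesis by (simp add: not_in_iff)
  qed
qed

lemma part_multiplicities_partition:
  assumes "M \<in> partitions n"
  shows "part_multiplicities M \<subseteq> {1..n} \<times> {1..n}"
    and "real (card (part_multiplicities M)) \<le> sqrt (2 * real n)"
proof -
  have pos: "\<forall>x\<in>#M. 0 < x" and sum: "sum_mset M = n" using assms by (auto simp: partitions_def)
  have "x \<in> {1..n} \<and> count M x \<in> {1..n}" if "x \<in># M" for x
  proof -
    have pos_x: "0 < x" "0 < count M x" using that pos by auto
    have "1 * x \<le> count M x * x" "count M x * 1 \<le> count M x * x"
      using pos_x by (intro mult_le_mono; simp)+
    moreover have "count M x * x \<le> n" using count_times_le_sum_mset[of M x] sum by simp
    ultimately have "x \<le> n" "count M x \<le> n" by linarith+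
    with pos_x show ?thesis by simp
  qed
  thus "part_multiplicities M \<subseteq> {1..n} \<times> {1..n}" by (auto simp: part_multiplicities_def)
  have "card (part_multiplicities M) = card (set_mset M)"
    unfolding part_multiplicities_def by (rule card_image) (auto simp: inj_on_def)
  moreover have "card (set_mset M) * card (set_mset M) \<le> card (set_mset M) * (card (set_mset M) + 1)"
    by simp
  moreover have "\<dots> \<le> 2 * n"
    using card_times_Suc_card_le_sum[of "set_mset M"] pos sum_set_mset_le_sum_mset[of M] sum by auto
  ultimately have "real (card (part_multiplicities M)) ^ 2 \<le> 2 * real n"
    by (simp add: power2_eq_square flip: of_nat_mult)
  thus "real (card (part_multiplicities M)) \<le> sqrt (2 * real n)"
    by (rule real_le_rsqrt)
qed

lemma card_subsets_card_le:
  assumes "finite S" "card S \<ge> 1"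
  shows "card {A. A \<subseteq> S \<and> card A \<le> d} \<le> (d + 1) * card S ^ d"
proof -
  have "{A. A \<subseteq> S \<and> card A \<le> d} = (\<Union>j\<le>d. {A. A \<subseteq> S \<and> card A = j})" by auto
  hence "card {A. A \<subseteq> S \<and> card A \<le> d} \<le> (\<Sum>j\<le>d. card {A. A \<subseteq> S \<and> card A = j})"
    by (simp add: card_UN_le)
  also have "\<dots> = (\<Sum>j\<le>d. card S choose j)" by (simp add: n_subsets[OF assms(1)])
  also have "\<dots> \<le> (\<Sum>j\<le>d. card S ^ d)"
  proof (rule sum_mono)
    fix j assume "j \<in> {..d}"
    hence "card S ^ j \<le> card S ^ d" using assms(2) by (simp add: power_increasing)
    thus "card S choose j \<le> card S ^ d"
      by (cases "j \<le> card S") (auto intro: le_trans[OF binomial_le_pow] simp: binomial_eq_0)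
  qed
  finally show ?thesis by simp
qed

lemma finite_partitions: "finite (partitions n)"
proof -
  have "part_multiplicities ` partitions n \<subseteq> Pow ({1..n} \<times> {1..n})"
    using part_multiplicities_partition(1) by blast
  hence "finite (part_multiplicities ` partitions n)" by (rule finite_subset) simp
  thus ?thesis using inj_part_multiplicities by (metis finite_imageD inj_on_subset subset_UNIV)
qed

lemma card_partitions_le:
  assumes "n \<ge> 1"
  shows "real (card (partitions n)) \<le> (sqrt (2 * real n) + 1) * (real n ^ 2) powr sqrt (2 * real n)"
proof -
  define d where "d = nat \<lfloor>sqrt (2 * real n)\<rfloor>"
  have d: "real d \<le> sqrt (2 * real n)" by (simp add: d_def)
  have "part_multiplicities ` partitions n \<subseteq> {A. A \<subseteq> {1..n} \<times> {1..n} \<and> card A \<le> d}"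
    using part_multiplicities_partition by (fastforce simp: d_def le_nat_floor)
  hence "card (part_multiplicities ` partitions n) \<le> card {A. A \<subseteq> {1..n} \<times> {1..n} \<and> card A \<le> d}"
    by (intro card_mono) auto
  also have "\<dots> \<le> (d + 1) * (n * n) ^ d"
    using card_subsets_card_le[of "{1..n} \<times> {1..n}" d] assms by simp
  finally have "card (partitions n) \<le> (d + 1) * (n * n) ^ d"
    using inj_part_multiplicities by (simp add: card_image inj_on_subset)
  hence "real (card (partitions n)) \<le> real ((d + 1) * (n * n) ^ d)" by (simp only: of_nat_le_iff)
  also have "\<dots> = (real d + 1) * (real n ^ 2) powr real d"
    using assms by (simp add: powr_realpow power2_eq_square algebra_simps)
  also have "\<dots> \<le> (sqrt (2 * real n) + 1) * (real n ^ 2) powr sqrt (2 * real n)"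
    using assms d by (intro mult_mono powr_mono) auto
  finally show ?thesis .
qed

lemma partitions_nonempty: "partitions n \<noteq> {}"
proof -
  have "(if n = 0 then {#} else {#n#}) \<in> partitions n" by (simp add: partitions_def)
  thus ?thesis by blast
qed

lemma one_le_n_times_card_partitions:
  assumes "n \<ge> 1"
  shows "1 \<le> real n * card (partitions n)"
proof -
  have "card (partitions n) \<ge> 1"
    using partitions_nonempty[of n] finite_partitions[of n] by (simp add: Suc_le_eq card_gt_0_iff)
  thus ?thesis using mult_mono[of 1 "real n" 1 "card (partitions n)"] assms by simp
qed

lemma ln_card_partitions_over_n_tendsto_0:
  "(\<lambda>n. ln (real n * card (partitions n)) / real n) \<longlonglongrightarrow> 0"
proof (rule tendsto_sandwich)
  note pos = one_le_n_times_card_partitions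
  show "eventually (\<lambda>n. 0 \<le> ln (real n * card (partitions n)) / real n) sequentially"
    using eventually_ge_at_top[of 1] by eventually_elim (use pos in simp)
  show "eventually (\<lambda>n. ln (real n * card (partitions n)) / real n
          \<le> ln (real n * ((sqrt (2 * real n) + 1) * (real n ^ 2) powr sqrt (2 * real n))) / real n) sequentially"
    using eventually_ge_at_top[of 1]
  proof eventually_elim
    case (elim n)
    with pos[OF elim] card_partitions_le[OF elim] show ?case
      by (intro divide_right_mono ln_mono mult_left_mono) (auto intro: less_le_trans[OF zero_less_one])
  qed
  show "(\<lambda>n. ln (real n * ((sqrt (2 * real n) + 1) * (real n ^ 2) powr sqrt (2 * real n))) / real n) \<longlonglongrightarrow> 0"
    by real_asymp
qed simp

section \<open>Power sums of the arguments of zeros\<close>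

lemma norm_deriv_0_le_of_Re_bounded:
  fixes h :: "complex \<Rightarrow> complex"
  assumes hol: "h holomorphic_on ball 0 1" and h0: "h 0 = 0"
    and Re_less: "\<And>u. u \<in> ball 0 1 \<Longrightarrow> Re (h u) < A"
  shows "norm (deriv h 0) \<le> 2 * A"
proof -
  have A: "A > 0" using Re_less[of 0] h0 by simp
  have den: "2 * of_real A - h u \<noteq> 0" if "u \<in> ball 0 1" for u
    using Re_less[OF that] A by (auto simp: complex_eq_iff)
  \<comment> \<open>The Cayley-type map \<open>w \<mapsto> w / (2A - w)\<close> sends the half-plane \<open>Re w < A\<close> into the unit disc.\<close>
  define \<phi> where "\<phi> u = h u / (2 * of_real A - h u)" for u
  have "\<phi> holomorphic_on ball 0 1" unfolding \<phi>_def using den by (intro holomorphic_intros hol)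
  moreover have "\<phi> 0 = 0" by (simp add: \<phi>_def h0)
  moreover have "norm (\<phi> u) < 1" if "norm u < 1" for u
  proof -
    have u: "u \<in> ball 0 1" using that by simp
    have "(norm (2 * of_real A - h u))^2 - (norm (h u))^2 = 4 * A * (A - Re (h u))"
      unfolding cmod_power2 by (simp add: power2_eq_square algebra_simps)
    also have "\<dots> > 0" using A Re_less[OF u] by simp
    finally have "norm (h u) < norm (2 * of_real A - h u)"
      by (simp add: power_less_imp_less_base)
    thus ?thesis using den[OF u] by (simp add: \<phi>_def norm_divide divide_less_eq)
  qed
  ultimately have "norm (deriv \<phi> 0) \<le> 1" using Schwarz_Lemma(2)[of \<phi> 0] by simp
  have dh: "(h has_field_derivative deriv h 0) (at 0)"
    by (rule holomorphic_derivI[OF hol open_ball]) simp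
  have "(\<phi> has_field_derivative deriv h 0 / (2 * of_real A)) (at 0)"
    unfolding \<phi>_def[abs_def] using den[of 0] A
    by (auto intro!: derivative_eq_intros dh simp: h0 power2_eq_square)
  hence "deriv \<phi> 0 = deriv h 0 / (2 * of_real A)" by (rule DERIV_imp_deriv)
  with \<open>norm (deriv \<phi> 0) \<le> 1\<close> A show ?thesis by (simp add: norm_divide divide_le_eq)
qed

lemma norm_deriv_0_le_ln_bound:
  fixes S :: "complex \<Rightarrow> complex"
  assumes hol: "S holomorphic_on ball 0 1" and nonzero: "\<And>u. u \<in> ball 0 1 \<Longrightarrow> S u \<noteq> 0"
    and S0: "S 0 = 1" and bound: "\<And>u. u \<in> ball 0 1 \<Longrightarrow> norm (S u) \<le> B" and "B \<ge> 1"
  shows "norm (deriv S 0) \<le> 2 * (ln B + 1)"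
proof -
  obtain g where holg: "g holomorphic_on ball 0 1" and exp_g: "\<And>u. u \<in> ball 0 1 \<Longrightarrow> exp (g u) = S u"
    using holomorphic_logarithm_exists[of "ball 0 1" S 0] hol nonzero by auto
  define h where "h u = g u - g 0" for u
  have exp_h: "exp (h u) = S u" if "u \<in> ball 0 1" for u
    using exp_g[OF that] exp_g[of 0] S0 by (simp add: h_def exp_diff)
  have "h holomorphic_on ball 0 1" unfolding h_def by (intro holomorphic_intros holg)
  moreover have "Re (h u) < ln B + 1" if "u \<in> ball 0 1" for u
  proof -
    have "exp (Re (h u)) \<le> B" using exp_h[OF that] bound[OF that] norm_exp_eq_Re[of "h u"] by simp
    hence "Re (h u) \<le> ln B" using \<open>B \<ge> 1\<close> by (simp add: ln_ge_iff)
    thus ?thesis by simp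
  qed
  ultimately have "norm (deriv h 0) \<le> 2 * (ln B + 1)"
    by (intro norm_deriv_0_le_of_Re_bounded) (auto simp: h_def)
  moreover have "deriv S 0 = deriv h 0"
  proof -
    have dh: "(h has_field_derivative deriv h 0) (at 0)"
      using \<open>h holomorphic_on ball 0 1\<close> by (intro holomorphic_derivI[OF _ open_ball]) auto
    have "((\<lambda>u. exp (h u)) has_field_derivative deriv h 0) (at 0)"
      using DERIV_fun_exp[OF dh] by (simp add: h_def)
    hence "(S has_field_derivative deriv h 0) (at 0)"
      using has_field_derivative_transform_within_open[OF _ open_ball, of _ _ 0 0 1 S] exp_h by simp
    thus ?thesis by (rule DERIV_imp_deriv)
  qed
  ultimately show ?thesis by simp
qed

lemma power_minus_one_eq_prod_roots_unity:
  fixes x :: complex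
  assumes "m \<ge> 1"
  shows "x ^ m - 1 = (\<Prod>\<zeta>\<in>{\<zeta>. \<zeta> ^ m = 1}. x - \<zeta>)"
proof -
  define q :: "complex poly" where "q = monom 1 m + [:-1:]"
  define U where "U = {\<zeta>::complex. \<zeta> ^ m = 1}"
  have poly_q: "poly q x = x ^ m - 1" for x by (simp add: q_def poly_monom)
  have deg: "degree q = m" using assms unfolding q_def
    by (subst degree_add_eq_left) (auto simp: degree_monom_eq)
  have "lead_coeff q = 1" using assms deg by (cases m) (auto simp: q_def)
  have "q \<noteq> 0" using deg assms by auto
  have roots: "{z. poly q z = 0} = U" by (auto simp: poly_q U_def)
  have "finite U" "card U = m" using assms unfolding U_def
    by (auto intro: finite_roots_unity card_roots_unity_eq)
  \<comment> \<open>\<open>m\<close> distinct roots, total multiplicity at most \<open>m\<close>: all roots are simple\<close>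
  have pos: "order \<zeta> q \<ge> 1" if "\<zeta> \<in> U" for \<zeta>
    using that roots \<open>q \<noteq> 0\<close> by (metis (mono_tags) mem_Collect_eq order_root less_one not_le)
  have "(\<Sum>\<zeta>\<in>U. 1) = (\<Sum>\<zeta>\<in>U. order \<zeta> q)"
  proof (rule antisym)
    show "(\<Sum>\<zeta>\<in>U. 1) \<le> (\<Sum>\<zeta>\<in>U. order \<zeta> q)" using pos by (rule sum_mono)
    show "(\<Sum>\<zeta>\<in>U. order \<zeta> q) \<le> (\<Sum>\<zeta>\<in>U. 1)"
      using sum_order_le_degree[OF \<open>q \<noteq> 0\<close>] roots deg \<open>card U = m\<close> by simp
  qed
  hence simple: "order \<zeta> q = 1" if "\<zeta> \<in> U" for \<zeta>
    using sum_mono_inv[OF _ pos that \<open>finite U\<close>] by simp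
  have "q = smult (lead_coeff q) (\<Prod>z|poly q z = 0. [:-z, 1:] ^ order z q)"
    by (rule complex_poly_decompose[symmetric])
  also have "\<dots> = (\<Prod>\<zeta>\<in>U. [:-\<zeta>, 1:])"
    using \<open>lead_coeff q = 1\<close> roots simple by (simp cong: prod.cong)
  finally have "poly q x = poly (\<Prod>\<zeta>\<in>U. [:-\<zeta>, 1:]) x" by simp
  thus ?thesis by (simp add: poly_q poly_prod U_def)
qed

lemma prod_one_minus_roots_unity:
  fixes c :: complex
  assumes "m \<ge> 1"
  shows "(\<Prod>\<zeta>\<in>{\<zeta>. \<zeta> ^ m = 1}. 1 - c * \<zeta>) = 1 - c ^ m"
proof (cases "c = 0")
  case True thus ?thesis using assms by simp
next
  case False
  have "card {\<zeta>::complex. \<zeta> ^ m = 1} = m" using assms by (intro card_roots_unity_eq) simp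
  have "(\<Prod>\<zeta>\<in>{\<zeta>. \<zeta> ^ m = 1}. 1 - c * \<zeta>) = (\<Prod>\<zeta>\<in>{\<zeta>. \<zeta> ^ m = 1}. c * (inverse c - \<zeta>))"
    using False by (intro prod.cong) (auto simp: right_diff_distrib)
  also have "\<dots> = c ^ m * (\<Prod>\<zeta>\<in>{\<zeta>. \<zeta> ^ m = 1}. inverse c - \<zeta>)"
    using \<open>card {\<zeta>::complex. \<zeta> ^ m = 1} = m\<close> by (simp add: prod.distrib)
  also have "\<dots> = 1 - c ^ m"
    using False by (simp add: power_minus_one_eq_prod_roots_unity[OF assms, symmetric] power_inverse
        right_diff_distrib)
  finally show ?thesis .
qed

lemma norm_prod_one_minus_power_le:
  fixes a :: "'a \<Rightarrow> complex"
  assumes m: "m \<ge> 1" and bound: "\<And>y. norm y \<le> 1 \<Longrightarrow> norm (\<Prod>z\<in>Z. (1 - a z * y) ^ e z) \<le> K"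
    and u: "norm u < 1"
  shows "norm (\<Prod>z\<in>Z. (1 - a z ^ m * u) ^ e z) \<le> K ^ m"
proof -
  obtain y where y: "u = y ^ m" using exists_complex_root[of m u] m by auto
  have "norm y < 1" using u m unfolding y by (metis norm_power not_le one_le_power)
  define U where "U = {\<zeta>::complex. \<zeta> ^ m = 1}"
  have "card U = m" using m unfolding U_def by (intro card_roots_unity_eq) simp
  have "(\<Prod>z\<in>Z. (1 - a z ^ m * u) ^ e z) = (\<Prod>z\<in>Z. (\<Prod>\<zeta>\<in>U. 1 - (a z * y) * \<zeta>) ^ e z)"
    unfolding U_def y by (simp add: prod_one_minus_roots_unity[OF m] power_mult_distrib)
  also have "\<dots> = (\<Prod>\<zeta>\<in>U. \<Prod>z\<in>Z. (1 - a z * (\<zeta> * y)) ^ e z)"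
    by (simp add: prod_power_distrib mult_ac prod.swap[of _ Z])
  finally have "norm (\<Prod>z\<in>Z. (1 - a z ^ m * u) ^ e z) = (\<Prod>\<zeta>\<in>U. norm (\<Prod>z\<in>Z. (1 - a z * (\<zeta> * y)) ^ e z))"
    by (simp add: prod_norm)
  also have "\<dots> \<le> (\<Prod>\<zeta>\<in>U. K)"
  proof (rule prod_mono)
    fix \<zeta> assume "\<zeta> \<in> U"
    hence "norm \<zeta> = 1" using m power_eq_1_iff[of \<zeta> m] by (auto simp: U_def)
    thus "0 \<le> norm (\<Prod>z\<in>Z. (1 - a z * (\<zeta> * y)) ^ e z) \<and> norm (\<Prod>z\<in>Z. (1 - a z * (\<zeta> * y)) ^ e z) \<le> K"
      using bound \<open>norm y < 1\<close> by (simp add: norm_mult)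
  qed
  finally show ?thesis using \<open>card U = m\<close> by simp
qed

lemma has_field_derivative_prod_one_minus_at_0:
  "((\<lambda>u. \<Prod>z\<in>Z. (1 - a z * u) ^ e z) has_field_derivative - (\<Sum>z\<in>Z. of_nat (e z) * a z)) (at 0)"
proof -
  have "((\<lambda>u. \<Prod>z\<in>Z. (1 - a z * u) ^ e z) has_field_derivative
      (\<Sum>z\<in>Z. - (of_nat (e z) * a z) * (\<Prod>y\<in>Z-{z}. (1 - a y * 0) ^ e y))) (at 0)"
    by (intro has_field_derivative_prod) (auto intro!: derivative_eq_intros)
  thus ?thesis by (simp add: sum_negf)
qed

text \<open>Zeros outside the unit disc are replaced by their mirror images \<open>1 / conj z\<close> in the unit
  circle; this keeps \<open>|x - z|\<close> on the circle up to the constant factor \<open>max 1 |z|\<close>.\<close>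
definition disc_reflection :: "complex \<Rightarrow> complex" where
  "disc_reflection z = (if norm z \<le> 1 then z else inverse (cnj z))"

lemma inverse_cnj_eq_sgn_div_norm: "inverse (cnj z) = sgn z / of_real (norm z)"
  by (simp add: complex_div_cnj[of 1] sgn_eq power2_eq_square field_simps flip: divide_inverse)

lemma norm_disc_reflection_le: "norm (disc_reflection z) \<le> 1"
  by (simp add: disc_reflection_def norm_inverse inverse_le_1_iff)

lemma norm_sgn_minus_disc_reflection_le:
  assumes "z \<noteq> 0"
  shows "norm (sgn z - disc_reflection z) \<le> \<bar>ln (norm z)\<bar>"
proof (cases "norm z \<le> 1")
  case True
  have "z = of_real (norm z) * sgn z" using assms by (simp add: sgn_eq)
  hence "sgn z - z = of_real (1 - norm z) * sgn z" by (metis mult_1 left_diff_distrib of_real_1 of_real_diff)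
  hence "norm (sgn z - z) = \<bar>1 - norm z\<bar> * norm (sgn z)" by (simp only: norm_mult norm_of_real)
  hence "norm (sgn z - z) = 1 - norm z" using True assms by (simp add: norm_sgn)
  moreover have "ln (norm z) \<le> norm z - 1" using assms by (intro ln_le_minus_one) simp
  ultimately show ?thesis using True by (simp add: disc_reflection_def)
next
  case False
  have "sgn z - inverse (cnj z) = of_real (1 - 1 / norm z) * sgn z"
    by (simp add: inverse_cnj_eq_sgn_div_norm algebra_simps)
  hence "norm (sgn z - inverse (cnj z)) = \<bar>1 - 1 / norm z\<bar> * norm (sgn z)" by (simp only: norm_mult norm_of_real)
  hence "norm (sgn z - inverse (cnj z)) = 1 - 1 / norm z" using False assms by (simp add: norm_sgn)
  moreover have "ln (1 / norm z) \<le> 1 / norm z - 1" using assms by (intro ln_le_minus_one) simp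
  ultimately show ?thesis using False assms by (simp add: disc_reflection_def ln_div)
qed

lemma norm_diff_eq_disc_reflection:
  assumes x: "norm x = 1"
  shows "norm (x - z) = max 1 (norm z) * norm (1 - disc_reflection z * cnj x)"
proof -
  have xx: "x * cnj x = 1" using x by (simp add: complex_norm_square[symmetric])
  show ?thesis
  proof (cases "norm z \<le> 1")
    case True
    have "1 - z * cnj x = (x - z) * cnj x" using xx by (simp add: algebra_simps)
    thus ?thesis using True x by (simp add: disc_reflection_def norm_mult)
  next
    case False
    hence "z \<noteq> 0" by auto
    have "1 - inverse (cnj z) * cnj x = cnj (z - x) / cnj z" using \<open>z \<noteq> 0\<close> by (simp add: field_simps)
    hence "norm (1 - inverse (cnj z) * cnj x) = norm (x - z) / norm z"
      by (simp add: norm_divide norm_minus_commute complex_mod_cnj flip: complex_cnj_diff)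
    thus ?thesis using False \<open>z \<noteq> 0\<close> by (simp add: disc_reflection_def)
  qed
qed

lemma norm_prod_disc_reflection_le:
  fixes Z :: "complex set" and e :: "complex \<Rightarrow> nat"
  assumes bound: "\<And>x. norm x = 1 \<Longrightarrow> norm (\<Prod>z\<in>Z. (x - z) ^ e z) \<le> K" and y: "norm y \<le> 1"
  shows "(\<Prod>z\<in>Z. max 1 (norm z) ^ e z) * norm (\<Prod>z\<in>Z. (1 - disc_reflection z * y) ^ e z) \<le> K"
proof -
  define M where "M = (\<Prod>z\<in>Z. max 1 (norm z) ^ e z)"
  define T where "T y = (\<Prod>z\<in>Z. (1 - disc_reflection z * y) ^ e z)" for y
  have "M \<ge> 1" unfolding M_def by (intro prod_ge_1) simp
  have circle: "M * norm (T (cnj x)) = norm (\<Prod>z\<in>Z. (x - z) ^ e z)" if "norm x = 1" for x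
    using norm_diff_eq_disc_reflection[OF that]
    by (simp add: M_def T_def prod_norm norm_power power_mult_distrib prod.distrib flip: prod_norm)
  have hol: "T holomorphic_on UNIV" unfolding T_def by (intro holomorphic_intros)
  have "T holomorphic_on interior (cball 0 1)" by (rule holomorphic_on_subset[OF hol]) simp
  moreover have "continuous_on (closure (cball 0 1)) T"
    by (rule continuous_on_subset[OF holomorphic_on_imp_continuous_on[OF hol]]) simp
  ultimately have "norm (T y) \<le> K / M"
  proof (rule maximum_modulus_frontier)
    fix v :: complex assume "v \<in> frontier (cball 0 1)"
    hence "norm (cnj v) = 1" by simp
    thus "norm (T v) \<le> K / M" using circle[of "cnj v"] bound[of "cnj v"] \<open>M \<ge> 1\<close>
      by (simp add: field_simps)
  qed (use y in auto)
  thus ?thesis using \<open>M \<ge> 1\<close> by (simp add: M_def T_def field_simps)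
qed

lemma sum_abs_ln_norm_eq:
  fixes Z :: "complex set" and e :: "complex \<Rightarrow> nat"
  assumes "finite Z" "0 \<notin> Z" and "(\<Prod>z\<in>Z. norm z ^ e z) = 1"
  shows "(\<Sum>z\<in>Z. e z * \<bar>ln (norm z)\<bar>) = 2 * ln (\<Prod>z\<in>Z. max 1 (norm z) ^ e z)"
proof -
  have pos: "norm z > 0" if "z \<in> Z" for z using that assms(2) by auto
  \<comment> \<open>\<open>|ln t| = 2 ln (max 1 t) - ln t\<close>, and the sum of \<open>e z * ln |z|\<close> vanishes\<close>
  have "(\<Sum>z\<in>Z. e z * ln (norm z)) = ln (\<Prod>z\<in>Z. norm z ^ e z)"
    using assms(1) pos by (simp add: ln_prod ln_realpow)
  hence "(\<Sum>z\<in>Z. e z * ln (norm z)) = 0" using assms(3) by simp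
  moreover have "\<bar>ln (norm z)\<bar> = 2 * ln (max 1 (norm z)) - ln (norm z)" if "z \<in> Z" for z
    using pos[OF that] by (cases "norm z \<le> 1") (auto simp: max_def)
  ultimately have "(\<Sum>z\<in>Z. e z * \<bar>ln (norm z)\<bar>) = 2 * (\<Sum>z\<in>Z. e z * ln (max 1 (norm z)))"
    by (simp add: right_diff_distrib sum_subtractf sum_distrib_left mult_ac)
  also have "\<dots> = 2 * ln (\<Prod>z\<in>Z. max 1 (norm z) ^ e z)"
    using assms(1) by (simp add: ln_prod ln_realpow)
  finally show ?thesis .
qed

lemma norm_sum_sgn_power_le:
  fixes Z :: "complex set" and e :: "complex \<Rightarrow> nat"
  assumes "finite Z" "0 \<notin> Z" "K \<ge> 1" "m \<ge> 1"
    and bound: "\<And>x. norm x = 1 \<Longrightarrow> norm (\<Prod>z\<in>Z. (x - z) ^ e z) \<le> K"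
    and balanced: "(\<Prod>z\<in>Z. norm z ^ e z) = 1"
  shows "norm (\<Sum>z\<in>Z. of_nat (e z) * sgn z ^ m) \<le> 4 * real m * ln K + 2"
proof -
  let ?\<rho> = disc_reflection
  define M where "M = (\<Prod>z\<in>Z. max 1 (norm z) ^ e z)"
  \<comment> \<open>\<open>S\<close> is zero-free on the disc and \<open>- S'(0)\<close> is the \<open>m\<close>-th power sum of the reflected zeros.\<close>
  define S where "S u = (\<Prod>z\<in>Z. (1 - ?\<rho> z ^ m * u) ^ e z)" for u
  have "M \<ge> 1" unfolding M_def by (intro prod_ge_1) simp
  have "M \<le> K" using norm_prod_disc_reflection_le[OF bound, of 0] by (simp add: M_def)
  have T_bound: "norm (\<Prod>z\<in>Z. (1 - ?\<rho> z * y) ^ e z) \<le> K" if "norm y \<le> 1" for y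
  proof -
    have "1 * norm (\<Prod>z\<in>Z. (1 - ?\<rho> z * y) ^ e z) \<le> M * norm (\<Prod>z\<in>Z. (1 - ?\<rho> z * y) ^ e z)"
      using \<open>M \<ge> 1\<close> by (intro mult_right_mono) auto
    thus ?thesis using norm_prod_disc_reflection_le[OF bound that] by (simp add: M_def)
  qed
  have S_bound: "norm (S u) \<le> K ^ m" if "u \<in> ball 0 1" for u
    using norm_prod_one_minus_power_le[OF \<open>m \<ge> 1\<close> T_bound] that by (simp add: S_def)
  have "S u \<noteq> 0" if "u \<in> ball 0 1" for u
  proof -
    have "norm (?\<rho> z ^ m * u) < 1" for z
    proof -
      have "norm (?\<rho> z) ^ m \<le> 1" by (simp add: power_le_one norm_disc_reflection_le)
      hence "norm (?\<rho> z) ^ m * norm u \<le> norm u" by (simp add: mult_left_le_one_le)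
      thus ?thesis using that by (simp add: norm_mult norm_power)
    qed
    hence "1 - ?\<rho> z ^ m * u \<noteq> 0" for z by (metis eq_iff_diff_eq_0 norm_one order.irrefl)
    thus ?thesis using \<open>finite Z\<close> by (simp add: S_def prod_zero_iff)
  qed
  moreover have "S holomorphic_on ball 0 1" unfolding S_def by (intro holomorphic_intros)
  ultimately have "norm (deriv S 0) \<le> 2 * (ln (K ^ m) + 1)"
    using S_bound \<open>K \<ge> 1\<close> by (intro norm_deriv_0_le_ln_bound) (auto simp: S_def one_le_power)
  moreover have "deriv S 0 = - (\<Sum>z\<in>Z. of_nat (e z) * ?\<rho> z ^ m)"
    unfolding S_def by (rule DERIV_imp_deriv[OF has_field_derivative_prod_one_minus_at_0])
  ultimately have reflected: "norm (\<Sum>z\<in>Z. of_nat (e z) * ?\<rho> z ^ m) \<le> 2 * real m * ln K + 2"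
    using \<open>K \<ge> 1\<close> by (simp add: ln_realpow algebra_simps)
  have "norm ((\<Sum>z\<in>Z. of_nat (e z) * sgn z ^ m) - (\<Sum>z\<in>Z. of_nat (e z) * ?\<rho> z ^ m))
      \<le> (\<Sum>z\<in>Z. e z * norm (sgn z ^ m - ?\<rho> z ^ m))"
    by (simp add: sum_subtractf[symmetric] right_diff_distrib[symmetric] norm_mult
        order_trans[OF norm_sum])
  also have "\<dots> \<le> (\<Sum>z\<in>Z. e z * (m * \<bar>ln (norm z)\<bar>))"
  proof (intro sum_mono mult_left_mono)
    fix z assume "z \<in> Z"
    hence "z \<noteq> 0" using \<open>0 \<notin> Z\<close> by auto
    have "norm (sgn z ^ m - ?\<rho> z ^ m) \<le> m * norm (sgn z - ?\<rho> z)"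
      using norm_disc_reflection_le[of z] \<open>z \<noteq> 0\<close> by (intro norm_power_diff) (auto simp: norm_sgn)
    also have "\<dots> \<le> m * \<bar>ln (norm z)\<bar>"
      using norm_sgn_minus_disc_reflection_le[OF \<open>z \<noteq> 0\<close>] by (simp add: mult_left_mono)
    finally show "norm (sgn z ^ m - ?\<rho> z ^ m) \<le> m * \<bar>ln (norm z)\<bar>" .
  qed simp
  also have "\<dots> = m * (2 * ln M)"
    using sum_abs_ln_norm_eq[OF \<open>finite Z\<close> \<open>0 \<notin> Z\<close> balanced]
    by (simp add: M_def sum_distrib_left mult_ac flip: sum_distrib_left)
  also have "\<dots> \<le> 2 * real m * ln K" using \<open>M \<ge> 1\<close> \<open>M \<le> K\<close> by (simp add: mult_left_mono)
  finally show ?thesis using reflected norm_triangle_sub[of "\<Sum>z\<in>Z. of_nat (e z) * sgn z ^ m"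
      "\<Sum>z\<in>Z. of_nat (e z) * ?\<rho> z ^ m"] by linarith
qed

section \<open>Weyl's equidistribution criterion on the circle\<close>

definition trig_poly :: "(real \<Rightarrow> complex) \<Rightarrow> bool" where
  "trig_poly f \<longleftrightarrow> (\<exists>cs :: (complex \<times> int) list. f = (\<lambda>t. \<Sum>(c, k)\<leftarrow>cs. c * cis (of_int k * t)))"

lemma trig_poly_monomial: "trig_poly (\<lambda>t. c * cis (of_int k * t))"
  unfolding trig_poly_def by (intro exI[of _ "[(c, k)]"]) simp

lemma trig_poly_add:
  assumes "trig_poly f" "trig_poly g"
  shows "trig_poly (\<lambda>t. f t + g t)"
proof -
  obtain cs ds where "f = (\<lambda>t. \<Sum>(c, k)\<leftarrow>cs. c * cis (of_int k * t))"
    and "g = (\<lambda>t. \<Sum>(c, k)\<leftarrow>ds. c * cis (of_int k * t))"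
    using assms by (auto simp: trig_poly_def)
  thus ?thesis unfolding trig_poly_def by (intro exI[of _ "cs @ ds"]) simp
qed

lemma trig_poly_induct [consumes 1, case_names monomial add]:
  assumes "trig_poly f"
    and monomial: "\<And>c k. P (\<lambda>t. c * cis (of_int k * t))"
    and add: "\<And>f g. trig_poly f \<Longrightarrow> trig_poly g \<Longrightarrow> P f \<Longrightarrow> P g \<Longrightarrow> P (\<lambda>t. f t + g t)"
  shows "P f"
proof -
  obtain cs where f: "f = (\<lambda>t. \<Sum>(c, k)\<leftarrow>cs. c * cis (of_int k * t))"
    using assms(1) by (auto simp: trig_poly_def)
  have "P (\<lambda>t. \<Sum>(c, k)\<leftarrow>cs. c * cis (of_int k * t)) \<and> trig_poly (\<lambda>t. \<Sum>(c, k)\<leftarrow>cs. c * cis (of_int k * t))"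
  proof (induction cs)
    case Nil
    show ?case using monomial[of 0 0] trig_poly_monomial[of 0 0] by simp
  next
    case (Cons ck cs)
    thus ?case using add[OF trig_poly_monomial _ monomial] trig_poly_add[OF trig_poly_monomial]
      by (cases ck) simp
  qed
  thus ?thesis by (simp add: f)
qed

lemma trig_poly_mult:
  assumes "trig_poly f" "trig_poly g"
  shows "trig_poly (\<lambda>t. f t * g t)"
  using assms
proof (induction f rule: trig_poly_induct)
  case (monomial c k)
  show ?case
    using monomial
  proof (induction g rule: trig_poly_induct)
    case (monomial d l)
    have "(\<lambda>t. c * cis (of_int k * t) * (d * cis (of_int l * t))) = (\<lambda>t. c * d * cis (of_int (k + l) * t))"
      by (simp add: fun_eq_iff cis_mult algebra_simps)
    thus ?case by (metis trig_poly_monomial)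
  qed (simp add: distrib_left trig_poly_add)
qed (simp add: distrib_right trig_poly_add)

lemma trig_poly_cnj: "trig_poly f \<Longrightarrow> trig_poly (\<lambda>t. cnj (f t))"
proof (induction f rule: trig_poly_induct)
  case (monomial c k)
  have "(\<lambda>t. cnj (c * cis (of_int k * t))) = (\<lambda>t. cnj c * cis (of_int (- k) * t))"
    by (simp add: fun_eq_iff cis_cnj)
  thus ?case by (metis trig_poly_monomial)
qed (simp add: trig_poly_add)

lemma continuous_on_trig_poly: "trig_poly f \<Longrightarrow> continuous_on A f"
  by (induction f rule: trig_poly_induct) (auto intro!: continuous_intros)

lemma real_polynomial_function_trig_poly:
  fixes p :: "complex \<Rightarrow> real"
  assumes "real_polynomial_function p"
  shows "\<exists>g. trig_poly g \<and> (\<forall>t. p (cis t) = Re (g t))"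
  using assms
proof (induction p rule: real_polynomial_function.induct)
  case (linear f)
  interpret bounded_linear f by fact
  define a where "a = complex_of_real (f 1) - \<i> * complex_of_real (f \<i>)"
  have f_eq: "f z = Re z * f 1 + Im z * f \<i>" for z
  proof -
    have "z = Re z *\<^sub>R 1 + Im z *\<^sub>R \<i>" by (simp add: complex_eq_iff)
    hence "f z = f (Re z *\<^sub>R 1) + f (Im z *\<^sub>R \<i>)" by (metis add)
    thus ?thesis by (simp only: scale real_scaleR_def)
  qed
  have "f (cis t) = Re (a * cis (of_int 1 * t))" for t using f_eq[of "cis t"] by (simp add: a_def)
  thus ?case using trig_poly_monomial by blast
next
  case (const c)
  have "c = Re (of_real c * cis (of_int 0 * t))" for t by simp
  thus ?case using trig_poly_monomial by blast
next
  case (add f g)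
  then obtain F G where "trig_poly F" "trig_poly G" "\<forall>t. f (cis t) = Re (F t)" "\<forall>t. g (cis t) = Re (G t)"
    by blast
  thus ?case by (intro exI[of _ "\<lambda>t. F t + G t"]) (simp add: trig_poly_add)
next
  case (mult f g)
  then obtain F G where FG: "trig_poly F" "trig_poly G" "\<forall>t. f (cis t) = Re (F t)" "\<forall>t. g (cis t) = Re (G t)"
    by blast
  \<comment> \<open>\<open>Re u * Re v = Re ((u v + u conj v) / 2)\<close>\<close>
  define H where "H t = (1 / 2) * cis (of_int 0 * t) * (F t * G t + F t * cnj (G t))" for t
  have "trig_poly H"
    unfolding H_def using FG by (intro trig_poly_mult trig_poly_add trig_poly_cnj trig_poly_monomial)
  moreover have "f (cis t) * g (cis t) = Re (H t)" for t
    using FG by (simp add: H_def field_simps)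
  ultimately show ?case by blast
qed

lemma has_integral_cis_int:
  "((\<lambda>t. cis (of_int k * t)) has_integral (if k = 0 then of_real (2 * pi) else 0)) {0..2 * pi}"
proof (cases "k = 0")
  case True
  thus ?thesis using has_integral_const_real[of "1::complex" 0 "2 * pi"] by (simp add: scaleR_conv_of_real)
next
  case False
  define F where "F t = cis (of_int k * t) / (\<i> * of_int k)" for t
  have "((\<lambda>t. cis (of_int k * t)) has_integral (F (2 * pi) - F 0)) {0..2 * pi}"
  proof (rule fundamental_theorem_of_calculus)
    fix t :: real
    have "((\<lambda>t. cis (of_int k * t)) has_derivative (\<lambda>h. (of_int k * h) *\<^sub>R (\<i> * cis (of_int k * t))))
        (at t within {0..2 * pi})"
      by (intro has_derivative_cis derivative_intros)
    hence "((\<lambda>t. cis (of_int k * t)) has_vector_derivative (of_int k * (\<i> * cis (of_int k * t))))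
        (at t within {0..2 * pi})"
      by (simp add: has_vector_derivative_def scaleR_conv_of_real mult_ac)
    hence "(F has_vector_derivative (of_int k * (\<i> * cis (of_int k * t))) / (\<i> * of_int k))
        (at t within {0..2 * pi})"
      unfolding F_def by (rule has_vector_derivative_divide)
    thus "(F has_vector_derivative cis (of_int k * t)) (at t within {0..2 * pi})"
      using False by (simp add: field_simps)
  qed simp
  moreover have "F (2 * pi) = F 0"
    using cis_multiple_2pi[of "of_int k"] by (simp add: F_def mult.commute)
  ultimately show ?thesis using False by simp
qed

lemma tendsto_sum_trig_poly:
  fixes w :: "nat \<Rightarrow> 'a \<Rightarrow> real" and \<theta> :: "'a \<Rightarrow> real"
  assumes moments: "\<And>k. (\<lambda>n. \<Sum>z\<in>Z n. of_real (w n z) * cis (of_int k * \<theta> z)) \<longlonglongrightarrow> (if k = 0 then 1 else 0)"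
    and "trig_poly g"
  shows "(\<lambda>n. \<Sum>z\<in>Z n. of_real (w n z) * g (\<theta> z)) \<longlonglongrightarrow> integral {0..2 * pi} g / of_real (2 * pi)"
  using \<open>trig_poly g\<close>
proof (induction rule: trig_poly_induct)
  case (monomial c k)
  have "integral {0..2 * pi} (\<lambda>t. c * cis (of_int k * t)) = c * (if k = 0 then of_real (2 * pi) else 0)"
    by (intro integral_unique has_integral_mult_right has_integral_cis_int)
  hence "integral {0..2 * pi} (\<lambda>t. c * cis (of_int k * t)) / of_real (2 * pi) = c * (if k = 0 then 1 else 0)"
    by (cases "k = 0") simp_all
  moreover have "(\<lambda>n. \<Sum>z\<in>Z n. of_real (w n z) * (c * cis (of_int k * \<theta> z)))
      = (\<lambda>n. c * (\<Sum>z\<in>Z n. of_real (w n z) * cis (of_int k * \<theta> z)))"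
    by (simp add: sum_distrib_left mult_ac)
  ultimately show ?case by (simp only:) (intro tendsto_mult_left moments)
next
  case (add f g)
  have "integral {0..2 * pi} (\<lambda>t. f t + g t) = integral {0..2 * pi} f + integral {0..2 * pi} g"
    using add.hyps
    by (intro integral_add integrable_continuous_real continuous_on_trig_poly)
  with tendsto_add[OF add.IH] show ?case
    by (simp add: distrib_left sum.distrib add_divide_distrib)
qed

lemma tendsto_of_approximations:
  fixes a :: "nat \<Rightarrow> real"
  assumes approx: "\<And>\<epsilon>. \<epsilon> > 0 \<Longrightarrow>
      \<exists>b l. b \<longlonglongrightarrow> l \<and> \<bar>l - L\<bar> \<le> \<epsilon> \<and> (\<forall>\<^sub>F n in sequentially. \<bar>a n - b n\<bar> \<le> \<epsilon>)"
  shows "a \<longlonglongrightarrow> L"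
proof (rule tendstoI)
  fix r :: real assume "r > 0"
  then obtain b l where b: "b \<longlonglongrightarrow> l" and l: "\<bar>l - L\<bar> \<le> r / 4"
    and ab: "\<forall>\<^sub>F n in sequentially. \<bar>a n - b n\<bar> \<le> r / 4"
    using approx[of "r / 4"] by auto
  have "\<forall>\<^sub>F n in sequentially. dist (b n) l < r / 4" by (rule tendstoD[OF b]) (use \<open>r > 0\<close> in simp)
  with ab show "\<forall>\<^sub>F n in sequentially. dist (a n) L < r"
  proof eventually_elim
    case (elim n)
    have "\<bar>a n - L\<bar> \<le> \<bar>a n - b n\<bar> + \<bar>b n - l\<bar> + \<bar>l - L\<bar>" by arith
    thus ?case using elim l \<open>r > 0\<close> by (simp add: dist_real_def)
  qed
qed

theorem weyl_criterion:
  fixes w :: "nat \<Rightarrow> 'a \<Rightarrow> real" and \<theta> :: "'a \<Rightarrow> real" and f :: "complex \<Rightarrow> real"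
  assumes nonneg: "\<And>n z. z \<in> Z n \<Longrightarrow> w n z \<ge> 0"
    and moments: "\<And>k. (\<lambda>n. \<Sum>z\<in>Z n. of_real (w n z) * cis (of_int k * \<theta> z)) \<longlonglongrightarrow> (if k = 0 then 1 else 0)"
    and f: "continuous_on (sphere 0 1) f"
  shows "(\<lambda>n. \<Sum>z\<in>Z n. w n z * f (cis (\<theta> z))) \<longlonglongrightarrow> (1 / (2 * pi)) * integral {0..2 * pi} (\<lambda>t. f (cis t))"
proof (rule tendsto_of_approximations)
  fix \<epsilon> :: real assume "\<epsilon> > 0"
  have "(\<lambda>n. of_real (\<Sum>z\<in>Z n. w n z)) \<longlonglongrightarrow> (of_real 1 :: complex)"
    using moments[of 0] by simp
  hence "(\<lambda>n. \<Sum>z\<in>Z n. w n z) \<longlonglongrightarrow> 1" by (simp only: tendsto_of_real_iff)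
  hence "\<forall>\<^sub>F n in sequentially. (\<Sum>z\<in>Z n. w n z) < 2" by (rule order_tendstoD) simp
  obtain g where "polynomial_function g" and fg: "\<forall>x\<in>sphere 0 1. norm (f x - g x) < \<epsilon> / 2"
    using Stone_Weierstrass_polynomial_function[OF compact_sphere f, of "\<epsilon> / 2"] \<open>\<epsilon> > 0\<close> by auto
  then obtain G where "trig_poly G" and gG: "\<And>t. g (cis t) = Re (G t)"
    using real_polynomial_function_trig_poly real_polynomial_function_eq by blast
  have fg': "\<bar>g (cis t) - f (cis t)\<bar> \<le> \<epsilon> / 2" for t
    using fg[rule_format, of "cis t"] by (simp add: abs_minus_commute)
  have cont_G: "continuous_on {0..2 * pi} G" using \<open>trig_poly G\<close> by (rule continuous_on_trig_poly)
  have cont_f: "continuous_on {0..2 * pi} (\<lambda>t. f (cis t))"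
    by (rule continuous_on_compose2[OF f]) (auto intro!: continuous_intros)
  have int_G: "integral {0..2 * pi} (\<lambda>t. Re (G t)) = Re (integral {0..2 * pi} G)"
    using integral_linear[OF integrable_continuous_real[OF cont_G] bounded_linear_Re] by (simp add: o_def)
  hence int_g: "integral {0..2 * pi} (\<lambda>t. g (cis t)) = Re (integral {0..2 * pi} G)" by (simp add: gG)
  show "\<exists>b l. b \<longlonglongrightarrow> l \<and> \<bar>l - (1 / (2 * pi)) * integral {0..2 * pi} (\<lambda>t. f (cis t))\<bar> \<le> \<epsilon> \<and>
      (\<forall>\<^sub>F n in sequentially. \<bar>(\<Sum>z\<in>Z n. w n z * f (cis (\<theta> z))) - b n\<bar> \<le> \<epsilon>)"
  proof (intro exI conjI)
    show "(\<lambda>n. \<Sum>z\<in>Z n. w n z * g (cis (\<theta> z))) \<longlonglongrightarrow> (1 / (2 * pi)) * integral {0..2 * pi} (\<lambda>t. g (cis t))"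
      using tendsto_Re[OF tendsto_sum_trig_poly[OF moments \<open>trig_poly G\<close>]]
      by (simp add: Re_sum gG int_G)
    have "norm (integral {0..2 * pi} (\<lambda>t. g (cis t) - f (cis t))) \<le> \<epsilon> / 2 * (2 * pi - 0)"
      using fg' cont_f
      by (intro integral_bound continuous_intros continuous_on_compose2[OF continuous_on_polymonial_function[OF
            \<open>polynomial_function g\<close>]]) auto
    moreover have "integral {0..2 * pi} (\<lambda>t. g (cis t) - f (cis t))
        = integral {0..2 * pi} (\<lambda>t. g (cis t)) - integral {0..2 * pi} (\<lambda>t. f (cis t))"
      using cont_f cont_G gG
      by (intro integral_diff integrable_continuous_real) (auto intro!: continuous_intros)
    ultimately show "\<bar>(1 / (2 * pi)) * integral {0..2 * pi} (\<lambda>t. g (cis t))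
        - (1 / (2 * pi)) * integral {0..2 * pi} (\<lambda>t. f (cis t))\<bar> \<le> \<epsilon>"
      by (simp add: field_simps abs_divide)
    show "\<forall>\<^sub>F n in sequentially.
        \<bar>(\<Sum>z\<in>Z n. w n z * f (cis (\<theta> z))) - (\<Sum>z\<in>Z n. w n z * g (cis (\<theta> z)))\<bar> \<le> \<epsilon>"
      using \<open>\<forall>\<^sub>F n in sequentially. (\<Sum>z\<in>Z n. w n z) < 2\<close>
    proof eventually_elim
      case (elim n)
      have "\<bar>\<Sum>z\<in>Z n. w n z * (f (cis (\<theta> z)) - g (cis (\<theta> z)))\<bar> \<le> (\<Sum>z\<in>Z n. w n z * (\<epsilon> / 2))"
      proof (intro order_trans[OF sum_abs] sum_mono)
        fix z assume "z \<in> Z n"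
        show "\<bar>w n z * (f (cis (\<theta> z)) - g (cis (\<theta> z)))\<bar> \<le> w n z * (\<epsilon> / 2)"
          unfolding abs_mult abs_of_nonneg[OF nonneg[OF \<open>z \<in> Z n\<close>]]
          using fg'[of "\<theta> z"] nonneg[OF \<open>z \<in> Z n\<close>]
          by (intro mult_left_mono) (simp_all add: abs_minus_commute)
      qed
      also have "\<dots> = (\<Sum>z\<in>Z n. w n z) * (\<epsilon> / 2)" by (simp add: sum_distrib_right)
      also have "\<dots> \<le> \<epsilon>" using mult_right_mono[of "\<Sum>z\<in>Z n. w n z" 2 "\<epsilon> / 2"] elim \<open>\<epsilon> > 0\<close> by simp
      finally show ?case by (simp add: sum_subtractf right_diff_distrib)
    qed
  qed
qed

section \<open>The polynomials \<open>F\<^sub>n\<close>\<close>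

lemma sum_mset_eq_sum_mset_pred_plus_size:
  "\<forall>x\<in>#M. 0 < x \<Longrightarrow> sum_mset M = sum_mset (image_mset (\<lambda>x. x - 1) M) + size (M :: nat multiset)"
  by (induction M) auto

lemma part_count_self: "part_count n n = 1"
proof -
  have "{M. size M = n \<and> (\<forall>x\<in>#M. 0 < x) \<and> sum_mset M = n} = {replicate_mset n 1}"
  proof (intro equalityI subsetI)
    fix M assume "M \<in> {M. size M = n \<and> (\<forall>x\<in>#M. 0 < x) \<and> sum_mset M = n}"
    hence M: "size M = n" "\<forall>x\<in>#M. 0 < x" "sum_mset M = n" by auto
    hence "\<forall>x\<in>#M. x - 1 = 0" using sum_mset_eq_sum_mset_pred_plus_size[OF M(2)] by simp
    hence "set_mset M \<subseteq> {1}" using M(2) by force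
    thus "M \<in> {replicate_mset n 1}" using M(1) set_mset_subset_singletonD by fastforce
  qed auto
  thus ?thesis by (simp add: part_count_def)
qed

lemma part_count_one: "n \<ge> 1 \<Longrightarrow> part_count 1 n = 1"
proof -
  assume "n \<ge> 1"
  have "{M. size M = 1 \<and> (\<forall>x\<in>#M. 0 < x) \<and> sum_mset M = n} = {{#n#}}"
  proof (intro equalityI subsetI)
    fix M assume "M \<in> {M. size M = 1 \<and> (\<forall>x\<in>#M. 0 < x) \<and> sum_mset M = n}"
    hence "size M = 1" "sum_mset M = n" by auto
    moreover obtain a where "M = {#a#}" using size_1_singleton_mset[OF \<open>size M = 1\<close>] by blast
    ultimately show "M \<in> {{#n#}}" by simp
  qed (use \<open>n \<ge> 1\<close> in auto)
  thus ?thesis by (simp add: part_count_def)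
qed

lemma part_count_le_card_partitions: "part_count k n \<le> card (partitions n)"
  unfolding part_count_def by (rule card_mono[OF finite_partitions]) (auto simp: partitions_def)

lemma coeff_Fpoly: "coeff (Fpoly n) j = (if 1 \<le> j \<and> j \<le> n then of_nat (part_count j n) else 0)"
  by (auto simp: Fpoly_def coeff_sum coeff_monom)

lemma degree_Fpoly: "degree (Fpoly n) = n"
proof (rule antisym)
  show "degree (Fpoly n) \<le> n" by (rule degree_le) (simp add: coeff_Fpoly)
  show "n \<le> degree (Fpoly n)" by (cases "n = 0") (auto intro: le_degree simp: coeff_Fpoly part_count_self)
qed

lemma norm_poly_Fpoly_le:
  assumes "norm x = 1"
  shows "norm (poly (Fpoly n) x) \<le> real n * card (partitions n)"
proof -
  have "norm (poly (Fpoly n) x) = norm (\<Sum>k=1..n. of_nat (part_count k n) * x ^ k)"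
    by (simp add: Fpoly_def poly_sum poly_monom)
  also have "\<dots> \<le> (\<Sum>k=1..n. real (part_count k n))"
    using assms by (intro order_trans[OF norm_sum] sum_mono) (simp add: norm_mult norm_power)
  also have "\<dots> \<le> (\<Sum>k=1..n. real (card (partitions n)))"
    by (intro sum_mono) (simp add: part_count_le_card_partitions)
  finally show ?thesis by simp
qed

definition nonzero_roots :: "complex poly \<Rightarrow> complex set" where
  "nonzero_roots p = {z. poly p z = 0 \<and> z \<noteq> 0}"

lemma poly_factor_nonzero_roots:
  fixes p :: "complex poly"
  assumes lead: "lead_coeff p = 1" and coeff0: "coeff p 0 = 0" and coeff1: "coeff p 1 = 1"
  shows "finite (nonzero_roots p)"
    and "poly p x = x * (\<Prod>z\<in>nonzero_roots p. (x - z) ^ order z p)"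
    and "(\<Prod>z\<in>nonzero_roots p. norm z ^ order z p) = 1"
    and "(\<Sum>z\<in>nonzero_roots p. order z p) = degree p - 1"
proof -
  define Z where "Z = nonzero_roots p"
  define q where "q = (\<Prod>z\<in>Z. [:-z, 1:] ^ order z p)"
  have "p \<noteq> 0" using lead by auto
  have roots: "{z. poly p z = 0} = insert 0 Z"
    using coeff0 by (auto simp: Z_def nonzero_roots_def poly_0_coeff_0)
  thus "finite (nonzero_roots p)" using poly_roots_finite[OF \<open>p \<noteq> 0\<close>] by (simp add: Z_def)
  hence "finite Z" by (simp add: Z_def)
  have "0 \<notin> Z" by (simp add: Z_def nonzero_roots_def)
  have "p = smult (lead_coeff p) (\<Prod>z|poly p z = 0. [:-z, 1:] ^ order z p)"
    by (rule complex_poly_decompose[symmetric])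
  also have "\<dots> = [:0, 1:] ^ order 0 p * q"
    using lead \<open>finite Z\<close> \<open>0 \<notin> Z\<close> by (simp add: roots q_def)
  finally have p_eq: "p = [:0, 1:] ^ order 0 p * q" .
  \<comment> \<open>\<open>0\<close> is a simple root because the linear coefficient is nonzero\<close>
  have "poly p 0 = 0" using coeff0 by (simp add: poly_0_coeff_0)
  hence "order 0 p \<noteq> 0" using \<open>p \<noteq> 0\<close> order_root by blast
  have "order 0 p = 1"
  proof (rule ccontr)
    assume "order 0 p \<noteq> 1"
    with \<open>order 0 p \<noteq> 0\<close> obtain j where "order 0 p = Suc (Suc j)"
      by (metis One_nat_def not0_implies_Suc)
    hence "coeff p 1 = 0" by (subst p_eq) (simp add: mult.assoc)
    with coeff1 show False by simp
  qed
  hence p_eq1: "p = [:0, 1:] * q" using p_eq by simp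
  have poly_q: "poly q x = (\<Prod>z\<in>Z. (x - z) ^ order z p)" for x by (simp add: q_def poly_prod)
  show "poly p x = x * (\<Prod>z\<in>nonzero_roots p. (x - z) ^ order z p)"
    by (subst p_eq1) (simp add: poly_q Z_def)
  have "(\<Prod>z\<in>Z. (- z) ^ order z p) = coeff p 1"
    using poly_q[of 0] by (simp add: p_eq1 poly_0_coeff_0)
  hence "norm (\<Prod>z\<in>Z. (- z) ^ order z p) = 1" using coeff1 by simp
  thus "(\<Prod>z\<in>nonzero_roots p. norm z ^ order z p) = 1"
    by (simp add: Z_def prod_norm[symmetric] norm_power)
  have "q \<noteq> 0" using p_eq1 \<open>p \<noteq> 0\<close> by auto
  hence "degree p = 1 + degree q" by (simp add: p_eq1 degree_mult_eq)
  moreover have "degree q = (\<Sum>z\<in>Z. order z p)"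
    unfolding q_def by (subst degree_prod_sum_eq) (auto simp: degree_power_eq)
  ultimately show "(\<Sum>z\<in>nonzero_roots p. order z p) = degree p - 1" by (simp add: Z_def)
qed

lemma Fpoly_factor_nonzero_roots:
  assumes "n \<ge> 1"
  shows "finite (nonzero_roots (Fpoly n))"
    and "poly (Fpoly n) x = x * (\<Prod>z\<in>nonzero_roots (Fpoly n). (x - z) ^ order z (Fpoly n))"
    and "(\<Prod>z\<in>nonzero_roots (Fpoly n). norm z ^ order z (Fpoly n)) = 1"
    and "(\<Sum>z\<in>nonzero_roots (Fpoly n). order z (Fpoly n)) = n - 1"
proof -
  have "lead_coeff (Fpoly n) = 1" "coeff (Fpoly n) 0 = 0" "coeff (Fpoly n) 1 = 1"
    using assms part_count_one[OF assms] by (simp_all add: degree_Fpoly coeff_Fpoly part_count_self)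
  from poly_factor_nonzero_roots[OF this] show
    "finite (nonzero_roots (Fpoly n))"
    "poly (Fpoly n) x = x * (\<Prod>z\<in>nonzero_roots (Fpoly n). (x - z) ^ order z (Fpoly n))"
    "(\<Prod>z\<in>nonzero_roots (Fpoly n). norm z ^ order z (Fpoly n)) = 1"
    "(\<Sum>z\<in>nonzero_roots (Fpoly n). order z (Fpoly n)) = n - 1"
    by (simp_all add: degree_Fpoly)
qed

lemma Fpoly_power_moment_tendsto_0:
  assumes "m \<ge> 1"
  shows "(\<lambda>n. (\<Sum>z\<in>nonzero_roots (Fpoly n). of_nat (order z (Fpoly n)) * sgn z ^ m) / of_nat n)
           \<longlonglongrightarrow> 0"
proof (rule Lim_null_comparison)
  define K where "K n = real n * card (partitions n)" for n
  show "\<forall>\<^sub>F n in sequentially.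
      norm ((\<Sum>z\<in>nonzero_roots (Fpoly n). of_nat (order z (Fpoly n)) * sgn z ^ m) / of_nat n)
        \<le> (4 * real m * ln (K n) + 2) / n"
    using eventually_ge_at_top[of 1]
  proof eventually_elim
    case (elim n)
    note roots = Fpoly_factor_nonzero_roots[OF elim]
    have "K n \<ge> 1" using one_le_n_times_card_partitions[OF elim] by (simp add: K_def)
    have "norm (\<Sum>z\<in>nonzero_roots (Fpoly n). of_nat (order z (Fpoly n)) * sgn z ^ m) \<le> 4 * real m * ln (K n) + 2"
    proof (rule norm_sum_sgn_power_le[OF roots(1) _ \<open>K n \<ge> 1\<close> assms _ roots(3)])
      fix x :: complex assume "norm x = 1"
      thus "norm (\<Prod>z\<in>nonzero_roots (Fpoly n). (x - z) ^ order z (Fpoly n)) \<le> K n"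
        using norm_poly_Fpoly_le[of x n] roots(2)[of x] by (simp add: K_def norm_mult)
    qed (simp add: nonzero_roots_def)
    thus ?case by (simp add: norm_divide divide_right_mono)
  qed
  have "(\<lambda>n. 4 * real m * (ln (K n) / real n) + 2 * (1 / real n)) \<longlonglongrightarrow> 4 * real m * 0 + 2 * 0"
    unfolding K_def by (intro tendsto_intros ln_card_partitions_over_n_tendsto_0 lim_inverse_n')
  thus "(\<lambda>n. (4 * real m * ln (K n) + 2) / real n) \<longlonglongrightarrow> 0"
    by (simp add: add_divide_distrib)
qed

lemma Fpoly_zero_moments:
  "(\<lambda>n. \<Sum>z\<in>nonzero_roots (Fpoly n). of_real (order z (Fpoly n) / n) * cis (of_int k * Arg z))
     \<longlonglongrightarrow> (if k = 0 then 1 else 0)"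
proof -
  define \<mu> where "\<mu> k n = (\<Sum>z\<in>nonzero_roots (Fpoly n). of_real (order z (Fpoly n) / n) * cis (of_int k * Arg z))"
    for k n
  have \<mu>_pos: "\<mu> (int m) = (\<lambda>n. (\<Sum>z\<in>nonzero_roots (Fpoly n). of_nat (order z (Fpoly n)) * sgn z ^ m) / of_nat n)"
    for m
  proof -
    have "cis (of_int (int m) * Arg z) = sgn z ^ m" if "z \<noteq> 0" for z
      using Complex.DeMoivre[of "Arg z" m] cis_Arg[OF that] by simp
    thus ?thesis unfolding \<mu>_def
      by (intro ext) (auto simp: sum_divide_distrib nonzero_roots_def intro!: sum.cong)
  qed
  have \<mu>_neg: "\<mu> (- k) n = cnj (\<mu> k n)" for k n
    by (simp add: \<mu>_def cis_cnj)
  have "\<mu> 0 \<longlonglongrightarrow> 1"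
  proof -
    have "\<forall>\<^sub>F n in sequentially. \<mu> 0 n = of_real (1 - 1 / real n)"
      using eventually_ge_at_top[of 1]
    proof eventually_elim
      case (elim n)
      have "\<mu> 0 n = of_real (\<Sum>z\<in>nonzero_roots (Fpoly n). real (order z (Fpoly n)) / n)"
        by (simp add: \<mu>_def of_real_sum)
      also have "(\<Sum>z\<in>nonzero_roots (Fpoly n). real (order z (Fpoly n)) / n) = real (n - 1) / n"
        unfolding sum_divide_distrib[symmetric] of_nat_sum[symmetric]
        using Fpoly_factor_nonzero_roots(4)[OF elim] by simp
      finally show ?case using elim by (simp add: of_nat_diff diff_divide_distrib)
    qed
    moreover have "(\<lambda>n. of_real (1 - 1 / real n)) \<longlonglongrightarrow> (of_real (1 - 0) :: complex)"
      by (intro tendsto_intros lim_inverse_n')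
    ultimately show ?thesis by (simp add: tendsto_cong)
  qed
  moreover have "\<mu> k \<longlonglongrightarrow> 0" if "k \<noteq> 0" for k
  proof (cases "k > 0")
    case True
    thus ?thesis using \<mu>_pos[of "nat k"] Fpoly_power_moment_tendsto_0[of "nat k"] by simp
  next
    case False
    hence "(\<lambda>n. cnj (\<mu> (int (nat (- k))) n)) \<longlonglongrightarrow> cnj 0"
      using \<mu>_pos[of "nat (- k)"] Fpoly_power_moment_tendsto_0[of "nat (- k)"] that
      by (intro tendsto_cnj) simp
    moreover have "\<mu> k = (\<lambda>n. cnj (\<mu> (- k) n))" using \<mu>_neg[of "- k"] by auto
    ultimately show ?thesis using False by simp
  qed
  ultimately have "\<mu> k \<longlonglongrightarrow> (if k = 0 then 1 else 0)" by simp
  thus ?thesis unfolding \<mu>_def .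
qed

theorem mainTheorem3:
  fixes f :: "complex \<Rightarrow> real"
  assumes "continuous_on (sphere 0 1) f"
  shows "(\<lambda>n. zero_arg_avg (Fpoly n) f)
           \<longlonglongrightarrow> (1 / (2 * pi)) * integral {0..2*pi} (\<lambda>t. f (cis t))"
proof -
  define w where "w n z = real (order z (Fpoly n)) / n" for n z
  have eq: "zero_arg_avg (Fpoly n) f = (\<Sum>z\<in>nonzero_roots (Fpoly n). w n z * f (cis (Arg z)))" for n
    by (simp add: zero_arg_avg_def nonzero_roots_def degree_Fpoly sum_distrib_left w_def)
  have "(\<lambda>n. \<Sum>z\<in>nonzero_roots (Fpoly n). w n z * f (cis (Arg z)))
      \<longlonglongrightarrow> (1 / (2 * pi)) * integral {0..2*pi} (\<lambda>t. f (cis t))"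
  proof (rule weyl_criterion)
    show "\<And>n z. 0 \<le> w n z" by (simp add: w_def)
    show "\<And>k. (\<lambda>n. \<Sum>z\<in>nonzero_roots (Fpoly n). of_real (w n z) * cis (of_int k * Arg z))
        \<longlonglongrightarrow> (if k = 0 then 1 else 0)"
      unfolding w_def by (rule Fpoly_zero_moments)
  qed (rule assms)
  thus ?thesis by (simp only: eq)
qed

end
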